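(* Let $G=(V,E)$ be a connected simple graph with $n$ vertices. Then (a) $$\sum_{uv\in E}\frac{1}{|N(u)\cap N(v)|+2}\ \ge\ \frac{n-1}{2},$$ where the sum runs over the edges of $G$ (each edge counted once); (b) equality holds in (a) if and only if every biconnected component of $G$ is a clique.
   Context: For a vertex $u$, $N(u)=\{v\in V: uv\in E\}$ is its open neighbourhood (so $u\notin N(u)$), and $N(u)\cap N(v)$ is the set of common neighbours of $u$ and $v$. A biconnected component (block) of $G$ is a maximal connected subgraph of $G$ that has no cut vertex of its own; in particular a bridge together with its two endpoints forms a biconnected component (isomorphic to $K_2$). *)

theory Defs
  imports Complex_Main
begin

definition simple_graph :: "'a set \<Rightarrow> 'a set set \<Rightarrow> bool" where
  "simple_graph V E \<longleftrightarrow> finite V \<and> (\<forall>e\<in>E. e \<subseteq> V \<and> card e = 2)"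

definition nbr :: "'a set set \<Rightarrow> 'a \<Rightarrow> 'a set" where
  "nbr E u = {v. {u, v} \<in> E}"

definition adj :: "'a set set \<Rightarrow> ('a \<times> 'a) set" where
  "adj E = {(x, y). {x, y} \<in> E}"

definition connected_graph :: "'a set \<Rightarrow> 'a set set \<Rightarrow> bool" where
  "connected_graph V E \<longleftrightarrow> V \<noteq> {} \<and> (\<forall>u\<in>V. \<forall>v\<in>V. (u, v) \<in> (adj E)\<^sup>*)"

definition subgraph :: "'a set \<Rightarrow> 'a set set \<Rightarrow> 'a set \<Rightarrow> 'a set set \<Rightarrow> bool" where
  "subgraph V' E' V E \<longleftrightarrow> V' \<subseteq> V \<and> E' \<subseteq> E \<and> (\<forall>e\<in>E'. e \<subseteq> V')"

text \<open>x is a cut vertex of (V, E): deleting x disconnects two remaining vertices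
  that are connected in (V,E) (i.e. the number of components increases).\<close>
definition cut_vertex :: "'a set \<Rightarrow> 'a set set \<Rightarrow> 'a \<Rightarrow> bool" where
  "cut_vertex V E x \<longleftrightarrow> x \<in> V \<and>
     (\<exists>u\<in>V - {x}. \<exists>w\<in>V - {x}. (u, w) \<in> (adj E)\<^sup>* \<and> (u, w) \<notin> (adj {e\<in>E. x \<notin> e})\<^sup>*)"

definition has_no_cut_vertex :: "'a set \<Rightarrow> 'a set set \<Rightarrow> bool" where
  "has_no_cut_vertex V E \<longleftrightarrow> (\<forall>x. \<not> cut_vertex V E x)"

definition block :: "'a set \<Rightarrow> 'a set set \<Rightarrow> 'a set \<Rightarrow> 'a set set \<Rightarrow> bool" where
  "block V E B EB \<longleftrightarrow>
     subgraph B EB V E \<and> connected_graph B EB \<and> has_no_cut_vertex B EB \<and>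
     (\<forall>B' EB'. subgraph B' EB' V E \<and> connected_graph B' EB' \<and> has_no_cut_vertex B' EB'
        \<and> B \<subseteq> B' \<and> EB \<subseteq> EB' \<longrightarrow> B' = B \<and> EB' = EB)"

definition is_clique :: "'a set \<Rightarrow> 'a set set \<Rightarrow> bool" where
  "is_clique B EB \<longleftrightarrow> (\<forall>u\<in>B. \<forall>v\<in>B. u \<noteq> v \<longrightarrow> {u, v} \<in> EB)"

definition edge_weight :: "'a set set \<Rightarrow> 'a set \<Rightarrow> real" where
  "edge_weight E e = 1 / (real (card (\<Inter>v\<in>e. nbr E v)) + 2)"

end

theory Submission
  imports Defs "HOL-Combinatorics.Transposition"
begin

text \<open>For a ranking of the vertices, keep an edge uv when u or v is ranked before all common
  neighbours of u and v. The kept edges still connect G, so every ranking keeps at least n - 1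
  edges, while uv is kept by a fraction 2 / (|N(u) \<inter> N(v)| + 2) of all rankings. Averaging over
  the rankings gives the inequality, with equality exactly when no ranking keeps a cycle. A kept
  cycle cannot have pairwise adjacent vertices, and every cycle lies in a block; conversely, a
  block that is not a clique yields a ranking that keeps a cycle.\<close>

lemma mem_adj_iff: "(u, v) \<in> adj E \<longleftrightarrow> {u, v} \<in> E"
  by (simp add: adj_def)

lemma adj_sym: "(u, v) \<in> adj E \<Longrightarrow> (v, u) \<in> adj E"
  by (simp add: adj_def insert_commute)

lemma rtrancl_adj_sym: "(u, v) \<in> (adj E)\<^sup>* \<Longrightarrow> (v, u) \<in> (adj E)\<^sup>*"
  by (induction rule: rtrancl_induct) (auto intro: converse_rtrancl_into_rtrancl adj_sym)

lemma rtrancl_adj_mono: "E \<subseteq> F \<Longrightarrow> (adj E)\<^sup>* \<subseteq> (adj F)\<^sup>*"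
  by (rule rtrancl_mono) (auto simp: adj_def)

lemma rtrancl_adj_walk:
  assumes "\<And>m. i \<le> m \<Longrightarrow> m < l \<Longrightarrow> {p m, p (Suc m)} \<in> F" and "i \<le> l"
  shows "(p i, p l) \<in> (adj F)\<^sup>*"
  using assms
proof (induction l)
  case (Suc l)
  show ?case
  proof (cases "i = Suc l")
    case False
    then have "(p i, p l) \<in> (adj F)\<^sup>*" using Suc by simp
    moreover have "(p l, p (Suc l)) \<in> adj F" using Suc.prems False by (simp add: adj_def)
    ultimately show ?thesis by simp
  qed simp
qed simp

lemma simple_graph_edgeD:
  "simple_graph V E \<Longrightarrow> {u, v} \<in> E \<Longrightarrow> u \<noteq> v \<and> u \<in> V \<and> v \<in> V"
  unfolding simple_graph_def by (cases "u = v") auto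

lemma simple_graph_edgeE:
  assumes "simple_graph V E" and "e \<in> E"
  obtains u v where "e = {u, v}" "u \<noteq> v" "u \<in> V" "v \<in> V"
proof -
  have "e \<subseteq> V" "card e = 2" using assms unfolding simple_graph_def by auto
  then show ?thesis using that by (auto simp: card_2_iff)
qed

lemma simple_graph_finite_edges: "simple_graph V E \<Longrightarrow> finite E"
  unfolding simple_graph_def by (meson Pow_iff finite_Pow_iff finite_subset subsetI)

lemma simple_graph_subset: "simple_graph V E \<Longrightarrow> F \<subseteq> E \<Longrightarrow> simple_graph V F"
  unfolding simple_graph_def by blast

section \<open>Rankings\<close>

text \<open>Rankings are fixed to be 0 off V so that there are finitely many of them.\<close>
definition rankings :: "'a set \<Rightarrow> ('a \<Rightarrow> nat) set" where
  "rankings V = {f. bij_betw f V {..<card V} \<and> (\<forall>x. x \<notin> V \<longrightarrow> f x = 0)}"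

definition rankings_first :: "'a set \<Rightarrow> 'a set \<Rightarrow> 'a \<Rightarrow> ('a \<Rightarrow> nat) set" where
  "rankings_first V S s = {f \<in> rankings V. \<forall>w\<in>S - {s}. f s < f w}"

lemma inj_on_ranking: "f \<in> rankings V \<Longrightarrow> inj_on f V"
  unfolding rankings_def bij_betw_def by blast

lemma finite_rankings: "finite V \<Longrightarrow> finite (rankings V)"
proof -
  assume "finite V"
  moreover have "rankings V \<subseteq> {f. \<forall>x. (x \<in> V \<longrightarrow> f x \<in> {..<card V}) \<and> (x \<notin> V \<longrightarrow> f x = 0)}"
    unfolding rankings_def bij_betw_def by auto
  ultimately show ?thesis
    using finite_set_of_finite_funs[of V "{..<card V}" 0] finite_subset by blast
qed

lemma rankings_nonempty: "finite V \<Longrightarrow> rankings V \<noteq> {}"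
proof -
  assume "finite V"
  then obtain h where "bij_betw h V {..<card V}"
    using ex_bij_betw_finite_nat atLeast0LessThan by metis
  then have "(\<lambda>x. if x \<in> V then h x else 0) \<in> rankings V"
    unfolding rankings_def by (auto cong: bij_betw_cong)
  then show ?thesis by blast
qed

lemma ranking_comp_transpose:
  assumes "f \<in> rankings V" and "s \<in> V" and "t \<in> V"
  shows "f \<circ> transpose s t \<in> rankings V"
proof -
  have "bij_betw (f \<circ> transpose s t) V {..<card V}"
    using assms bij_betw_trans[of "transpose s t" V V f] by (simp add: rankings_def)
  then show ?thesis using assms by (auto simp: rankings_def transpose_def)
qed

lemma transpose_rankings_first:
  assumes "S \<subseteq> V" "s \<in> S" "t \<in> S" "f \<in> rankings_first V S s"
  shows "f \<circ> transpose s t \<in> rankings_first V S t"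
  using assms ranking_comp_transpose[of f V s t]
  unfolding rankings_first_def by (auto simp: transpose_def)

lemma card_rankings_first_eq:
  assumes "S \<subseteq> V" "s \<in> S" "t \<in> S"
  shows "card (rankings_first V S s) = card (rankings_first V S t)"
proof -
  have "bij_betw (\<lambda>f. f \<circ> transpose s t) (rankings_first V S s) (rankings_first V S t)"
  proof (rule bij_betw_byWitness[where f' = "\<lambda>f. f \<circ> transpose s t"])
    show "(\<lambda>f. f \<circ> transpose s t) ` rankings_first V S t \<subseteq> rankings_first V S s"
      using transpose_rankings_first[OF assms(1,3,2)] by (auto simp: transpose_commute)
  qed (use transpose_rankings_first[OF assms] in \<open>auto simp: comp_assoc\<close>)
  then show ?thesis by (rule bij_betw_same_card)
qed

lemma rankings_first_disjoint:
  assumes "s \<in> S" "t \<in> S" "s \<noteq> t"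
  shows "rankings_first V S s \<inter> rankings_first V S t = {}"
proof -
  have "f s < f t" "f t < f s" if "f \<in> rankings_first V S s" "f \<in> rankings_first V S t" for f
    using that assms by (auto simp: rankings_first_def)
  then show ?thesis by (meson disjoint_iff less_asym)
qed

lemma rankings_eq_Union_rankings_first:
  assumes "finite V" "S \<subseteq> V" "S \<noteq> {}"
  shows "rankings V = (\<Union>s\<in>S. rankings_first V S s)"
proof (intro equalityI subsetI)
  fix f assume f: "f \<in> rankings V"
  obtain s where s: "s \<in> S" "\<And>w. w \<in> S \<Longrightarrow> f s \<le> f w"
    using ex_has_least_nat[of "\<lambda>x. x \<in> S" _ f] assms(3) by blast
  have "f s < f w" if "w \<in> S - {s}" for w
    using s that inj_on_ranking[OF f] assms(2) by (metis DiffE inj_on_contraD insertI1 le_neq_implies_less subsetD)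
  then show "f \<in> (\<Union>s\<in>S. rankings_first V S s)" using f s by (auto simp: rankings_first_def)
qed (auto simp: rankings_first_def)

lemma card_rankings_eq_mult_rankings_first:
  assumes "finite V" "S \<subseteq> V" "s \<in> S"
  shows "card (rankings V) = card S * card (rankings_first V S s)"
proof -
  have "finite S" using assms finite_subset by blast
  moreover have "finite (rankings_first V S t)" for t
    using finite_rankings[OF assms(1)] by (simp add: rankings_first_def)
  moreover note rankings_first_disjoint
  ultimately have "card (rankings V) = (\<Sum>t\<in>S. card (rankings_first V S t))"
    using rankings_eq_Union_rankings_first[OF assms(1,2)] assms(3) card_UN_disjoint
    by (metis empty_iff)
  also have "\<dots> = card S * card (rankings_first V S s)"
    using card_rankings_first_eq[OF assms(2) _ assms(3)] by simp
  finally show ?thesis .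
qed

lemma ranking_extending_list:
  assumes "finite V" "distinct Q" "set Q \<subseteq> V"
  obtains f where "f \<in> rankings V" "\<And>i. i < length Q \<Longrightarrow> f (Q ! i) = i"
    "\<And>w. w \<in> V \<Longrightarrow> f w < length Q \<Longrightarrow> w \<in> set Q"
proof -
  obtain R where R: "distinct R" "set R = V - set Q"
    using finite_distinct_list[of "V - set Q"] assms(1) by blast
  define L where "L = Q @ R"
  have L: "distinct L" "set L = V" using R assms unfolding L_def by auto
  then have "length L = card V" using distinct_card by fastforce
  then have bijL: "bij_betw ((!) L) {..<card V} V"
    using bij_betw_nth[OF L(1)] L(2) lessThan_atLeast0 by simp
  define f where "f v = (if v \<in> V then the_inv_into {..<card V} ((!) L) v else 0)" for v
  have "bij_betw f V {..<card V}"
    using bij_betw_the_inv_into[OF bijL] by (rule bij_betw_cong[THEN iffD1, rotated]) (simp add: f_def)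
  then have f: "f \<in> rankings V" by (simp add: rankings_def f_def)
  have fL: "f (L ! i) = i" if "i < card V" for i
    using that bijL by (auto simp: f_def bij_betw_def the_inv_into_f_f)
  have fQ: "f (Q ! i) = i" if "i < length Q" for i
    using fL[of i] that \<open>length L = card V\<close> by (simp add: L_def nth_append)
  have "w \<in> set Q" if "w \<in> V" "f w < length Q" for w
  proof -
    have "f (Q ! f w) = f w" using fQ that(2) by blast
    then have "Q ! f w = w"
      using inj_on_ranking[OF f] that assms(3) nth_mem by (metis inj_onD subsetD)
    then show ?thesis using that(2) nth_mem by metis
  qed
  with f fQ that show ?thesis by blast
qed

section \<open>Edges kept by a ranking\<close>

definition common_nbrs :: "'a set set \<Rightarrow> 'a set \<Rightarrow> 'a set" where
  "common_nbrs E e = (\<Inter>v\<in>e. nbr E v)"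

definition early_edges :: "'a set set \<Rightarrow> ('a \<Rightarrow> nat) \<Rightarrow> 'a set set" where
  "early_edges E f = {e \<in> E. \<exists>u\<in>e. \<forall>w\<in>common_nbrs E e. f u < f w}"

lemma mem_common_nbrs_pair: "w \<in> common_nbrs E {u, v} \<longleftrightarrow> {u, w} \<in> E \<and> {v, w} \<in> E"
  by (simp add: common_nbrs_def nbr_def)

lemma common_nbrs_subset:
  assumes "simple_graph V E" and "e \<in> E"
  shows "common_nbrs E e \<subseteq> V - e"
proof
  fix w assume w: "w \<in> common_nbrs E e"
  obtain u v where "e = {u, v}" using simple_graph_edgeE[OF assms] by metis
  then show "w \<in> V - e"
    using w simple_graph_edgeD[OF assms(1)] by (auto simp: mem_common_nbrs_pair)
qed

lemma early_edges_subset: "early_edges E f \<subseteq> E"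
  by (auto simp: early_edges_def)

lemma early_edgesI:
  assumes "simple_graph V E" "inj_on f V" "{u, v} \<in> E"
    and "\<And>w. w \<in> common_nbrs E {u, v} \<Longrightarrow> f w < f u \<Longrightarrow> False"
  shows "{u, v} \<in> early_edges E f"
proof -
  have "f u < f w" if "w \<in> common_nbrs E {u, v}" for w
  proof -
    have "w \<in> V" "w \<noteq> u" "u \<in> V"
      using that common_nbrs_subset[OF assms(1,3)] simple_graph_edgeD[OF assms(1,3)] by auto
    then show ?thesis using assms(2,4) that by (metis inj_on_contraD nat_neq_iff)
  qed
  then show ?thesis using assms(3) by (auto simp: early_edges_def)
qed

text \<open>If uv is not kept, its earliest common neighbour w is ranked before u and v, and the
  edges uw and wv are kept by induction on the rank of the earlier endpoint.\<close>
lemma rtrancl_adj_early_edges: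
  assumes "simple_graph V E" and "inj_on f V" and "{u, v} \<in> E"
  shows "(u, v) \<in> (adj (early_edges E f))\<^sup>*"
  using assms(3)
proof (induction "min (f u) (f v)" arbitrary: u v rule: less_induct)
  case less
  show ?case
  proof (cases "{u, v} \<in> early_edges E f")
    case True
    then show ?thesis by (simp add: mem_adj_iff r_into_rtrancl)
  next
    case False
    then have "common_nbrs E {u, v} \<noteq> {}" using less.prems by (auto simp: early_edges_def)
    then obtain w where w: "w \<in> common_nbrs E {u, v}"
      and w_least: "\<And>w'. w' \<in> common_nbrs E {u, v} \<Longrightarrow> f w \<le> f w'"
      using ex_has_least_nat[of "\<lambda>w. w \<in> common_nbrs E {u, v}" _ f] by blast
    have uw: "{u, w} \<in> E" and wv: "{w, v} \<in> E"
      using w by (auto simp: mem_common_nbrs_pair insert_commute)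
    have "f w < f u"
      using False early_edgesI[OF assms(1,2) less.prems] w_least by (meson le_less_trans not_le)
    moreover have "f w < f v"
      using False early_edgesI[OF assms(1,2), of v u] less.prems w_least
      by (metis insert_commute le_less_trans not_le)
    ultimately have "(u, w) \<in> (adj (early_edges E f))\<^sup>*" "(w, v) \<in> (adj (early_edges E f))\<^sup>*"
      using less.hyps uw wv by auto
    then show ?thesis by simp
  qed
qed

lemma connected_early_edges:
  assumes "simple_graph V E" and "connected_graph V E" and "inj_on f V"
  shows "connected_graph V (early_edges E f)"
proof -
  have "adj E \<subseteq> (adj (early_edges E f))\<^sup>*"
    using rtrancl_adj_early_edges[OF assms(1,3)] by (auto simp: adj_def)
  then have "(adj E)\<^sup>* \<subseteq> (adj (early_edges E f))\<^sup>*" by (rule rtrancl_subset_rtrancl)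
  then show ?thesis using assms(2) unfolding connected_graph_def by blast
qed

lemma early_edge_rankings_eq:
  assumes "simple_graph V E" and "{u, v} \<in> E"
  defines "S \<equiv> {u, v} \<union> common_nbrs E {u, v}"
  shows "{f \<in> rankings V. {u, v} \<in> early_edges E f} = rankings_first V S u \<union> rankings_first V S v"
proof -
  have uv: "u \<noteq> v" "u \<in> V" "v \<in> V" using simple_graph_edgeD[OF assms(1,2)] by auto
  have Su: "S - {u} = insert v (common_nbrs E {u, v})" and Sv: "S - {v} = insert u (common_nbrs E {u, v})"
    using common_nbrs_subset[OF assms(1,2)] uv(1) by (auto simp: S_def)
  show ?thesis
  proof (intro equalityI subsetI)
    fix f assume "f \<in> {f \<in> rankings V. {u, v} \<in> early_edges E f}"
    then obtain x where f: "f \<in> rankings V" and x: "x \<in> {u, v}" "\<forall>w\<in>common_nbrs E {u, v}. f x < f w"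
      by (auto simp: early_edges_def)
    have "f u \<noteq> f v" by (rule inj_on_contraD[OF inj_on_ranking[OF f] uv])
    then consider "f u < f v" | "f v < f u" by linarith
    then show "f \<in> rankings_first V S u \<union> rankings_first V S v"
    proof cases
      case 1
      then have "\<forall>w\<in>S - {u}. f u < f w" unfolding Su using x by fastforce
      then show ?thesis using f by (simp add: rankings_first_def)
    next
      case 2
      then have "\<forall>w\<in>S - {v}. f v < f w" unfolding Sv using x by fastforce
      then show ?thesis using f by (simp add: rankings_first_def)
    qed
  next
    fix f assume "f \<in> rankings_first V S u \<union> rankings_first V S v"
    then obtain x where "x \<in> {u, v}" "f \<in> rankings V" "\<forall>w\<in>common_nbrs E {u, v}. f x < f w"
      using Su Sv unfolding rankings_first_def by blast
    then show "f \<in> {f \<in> rankings V. {u, v} \<in> early_edges E f}"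
      using assms(2) by (auto simp: early_edges_def)
  qed
qed

lemma card_rankings_early_edge:
  assumes "simple_graph V E" and "e \<in> E"
  shows "card {f \<in> rankings V. e \<in> early_edges E f} * (card (common_nbrs E e) + 2)
    = 2 * card (rankings V)"
proof -
  obtain u v where uv: "e = {u, v}" "u \<noteq> v" "u \<in> V" "v \<in> V"
    using simple_graph_edgeE[OF assms] by metis
  have fin: "finite V" using assms(1) by (simp add: simple_graph_def)
  define S where "S = e \<union> common_nbrs E e"
  have cn: "common_nbrs E e \<subseteq> V - e" "finite (common_nbrs E e)"
    using common_nbrs_subset[OF assms] fin finite_subset by auto
  then have "card S = card e + card (common_nbrs E e)"
    unfolding S_def using uv(1) by (intro card_Un_disjoint) auto
  then have S: "S \<subseteq> V" "u \<in> S" "v \<in> S" "card S = card (common_nbrs E e) + 2"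
    using cn uv by (auto simp: S_def)
  have "finite (rankings_first V S w)" for w
    using finite_rankings[OF fin] by (simp add: rankings_first_def)
  then have "card {f \<in> rankings V. e \<in> early_edges E f} = 2 * card (rankings_first V S u)"
    using early_edge_rankings_eq[OF assms(1), of u v] assms(2)
      rankings_first_disjoint[OF S(2,3) uv(2)] card_rankings_first_eq[OF S(1-3)]
    by (simp add: uv(1) S_def card_Un_disjoint)
  then show ?thesis
    using card_rankings_eq_mult_rankings_first[OF fin S(1,2)] S(4) by simp
qed

lemma sum_card_early_edges:
  assumes "simple_graph V E"
  shows "(\<Sum>f\<in>rankings V. real (card (early_edges E f)))
    = 2 * real (card (rankings V)) * (\<Sum>e\<in>E. edge_weight E e)"
proof -
  have fin: "finite (rankings V)" "finite E"
    using assms finite_rankings simple_graph_finite_edges by (auto simp: simple_graph_def)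
  have "(\<Sum>f\<in>rankings V. real (card (early_edges E f)))
      = (\<Sum>f\<in>rankings V. \<Sum>e\<in>E. if e \<in> early_edges E f then 1 else 0)"
    using fin by (simp add: sum.If_cases Int_absorb1 early_edges_subset)
  also have "\<dots> = (\<Sum>e\<in>E. real (card {f \<in> rankings V. e \<in> early_edges E f}))"
    using fin by (subst sum.swap) (simp add: sum.If_cases Int_def conj_commute)
  also have "\<dots> = (\<Sum>e\<in>E. 2 * real (card (rankings V)) * edge_weight E e)"
  proof (rule sum.cong)
    fix e assume "e \<in> E"
    from arg_cong[OF card_rankings_early_edge[OF assms this], of real]
    have "real (card {f \<in> rankings V. e \<in> early_edges E f}) * (real (card (common_nbrs E e)) + 2)
        = 2 * real (card (rankings V))"
      by (simp add: algebra_simps)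
    then show "real (card {f \<in> rankings V. e \<in> early_edges E f})
        = 2 * real (card (rankings V)) * edge_weight E e"
      by (simp add: edge_weight_def common_nbrs_def field_simps)
  qed simp
  finally show ?thesis by (simp add: sum_distrib_left)
qed

section \<open>Spanning trees\<close>

lemma connected_graphI:
  assumes "r \<in> V" and "\<And>v. v \<in> V \<Longrightarrow> (r, v) \<in> (adj F)\<^sup>*"
  shows "connected_graph V F"
proof -
  have "(u, v) \<in> (adj F)\<^sup>*" if "u \<in> V" "v \<in> V" for u v
    using rtrancl_trans[OF rtrancl_adj_sym[OF assms(2)[OF that(1)]] assms(2)[OF that(2)]] .
  then show ?thesis using assms(1) by (auto simp: connected_graph_def)
qed

lemma parent_map_exists:
  assumes "connected_graph V F" and "r \<in> V"
  obtains par and d :: "'a \<Rightarrow> nat" where "\<And>v. v \<in> V - {r} \<Longrightarrow> {par v, v} \<in> F \<and> d (par v) < d v"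
proof -
  define d where "d v = (LEAST k. (r, v) \<in> adj F ^^ k)" for v
  have "\<exists>u. {u, v} \<in> F \<and> d u < d v" if v: "v \<in> V - {r}" for v
  proof -
    have "\<exists>k. (r, v) \<in> adj F ^^ k"
      using assms v rtrancl_power unfolding connected_graph_def by blast
    then have "(r, v) \<in> adj F ^^ d v" unfolding d_def by (rule LeastI_ex)
    moreover have "d v \<noteq> 0" using calculation v by (cases "d v") auto
    ultimately have "(r, v) \<in> adj F ^^ Suc (d v - 1)" by simp
    then obtain u where "(r, u) \<in> adj F ^^ (d v - 1)" "(u, v) \<in> adj F"
      by (rule relpow_Suc_E)
    moreover from this(1) have "d u \<le> d v - 1" unfolding d_def by (rule Least_le)
    ultimately show ?thesis using \<open>d v \<noteq> 0\<close> by (auto simp: mem_adj_iff)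
  qed
  then have "\<forall>v\<in>V - {r}. \<exists>u. {u, v} \<in> F \<and> d u < d v" by blast
  from bchoice[OF this] obtain par where "\<forall>v\<in>V - {r}. {par v, v} \<in> F \<and> d (par v) < d v"
    by blast
  then show ?thesis using that by blast
qed

text \<open>The tree consists of the edges from each non-root vertex to its parent.\<close>
lemma spanning_tree_exists:
  assumes "simple_graph V F" and "connected_graph V F"
  obtains T where "T \<subseteq> F" "card T = card V - 1" "connected_graph V T"
proof -
  obtain r where r: "r \<in> V" using assms(2) by (auto simp: connected_graph_def)
  obtain par and d :: "'a \<Rightarrow> nat" where par: "\<And>v. v \<in> V - {r} \<Longrightarrow> {par v, v} \<in> F \<and> d (par v) < d v"
    using parent_map_exists[OF assms(2) r] by blast
  define T where "T = (\<lambda>v. {par v, v}) ` (V - {r})"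
  have "inj_on (\<lambda>v. {par v, v}) (V - {r})"
  proof (rule inj_onI)
    fix v w assume vw: "v \<in> V - {r}" "w \<in> V - {r}" "{par v, v} = {par w, w}"
    show "v = w"
    proof (rule ccontr)
      assume "v \<noteq> w"
      then have "v = par w" "w = par v" using vw(3) by (auto simp: doubleton_eq_iff)
      then show False using par[OF vw(1)] par[OF vw(2)] by simp
    qed
  qed
  then have "card T = card V - 1"
    using assms(1) r by (simp add: T_def card_image simple_graph_def)
  moreover have "(r, v) \<in> (adj T)\<^sup>*" if "v \<in> V" for v
    using that
  proof (induction "d v" arbitrary: v rule: less_induct)
    case less
    show ?case
    proof (cases "v = r")
      case False
      then have "{par v, v} \<in> F" "d (par v) < d v" using par less.prems by auto
      then have "(r, par v) \<in> (adj T)\<^sup>*"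
        using less.hyps simple_graph_edgeD[OF assms(1)] by blast
      moreover have "(par v, v) \<in> adj T" using False less.prems by (auto simp: T_def mem_adj_iff)
      ultimately show ?thesis by simp
    qed simp
  qed
  moreover have "T \<subseteq> F" using par by (auto simp: T_def)
  ultimately show ?thesis using that connected_graphI[OF r] by blast
qed

lemma card_edges_ge_if_connected:
  assumes "simple_graph V F" and "connected_graph V F"
  shows "card V - 1 \<le> card F"
proof -
  obtain T where "T \<subseteq> F" "card T = card V - 1"
    using spanning_tree_exists[OF assms] by blast
  moreover from this(1) have "card T \<le> card F"
    by (rule card_mono[OF simple_graph_finite_edges[OF assms(1)]])
  ultimately show ?thesis by simp
qed

lemma redundant_edge_if_card_ge:
  assumes "simple_graph V F" and "connected_graph V F" and "card V \<le> card F"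
  obtains a b where "{a, b} \<in> F" "(a, b) \<in> (adj (F - {{a, b}}))\<^sup>*"
proof -
  obtain T where T: "T \<subseteq> F" "card T = card V - 1" "connected_graph V T"
    using spanning_tree_exists[OF assms(1,2)] by blast
  have "card V \<noteq> 0"
    using assms(1,2) by (auto simp: simple_graph_def connected_graph_def)
  have "\<not> F \<subseteq> T"
  proof
    assume "F \<subseteq> T"
    then have "card F \<le> card T"
      using T(1) simple_graph_finite_edges[OF assms(1)] by (simp add: card_mono finite_subset)
    then show False using T(2) assms(3) \<open>card V \<noteq> 0\<close> by linarith
  qed
  then obtain e where e: "e \<in> F" "e \<notin> T" by blast
  then obtain a b where ab: "e = {a, b}" "a \<in> V" "b \<in> V"
    using simple_graph_edgeE[OF assms(1)] by blast
  have "(a, b) \<in> (adj T)\<^sup>*" using T(3) ab by (simp add: connected_graph_def)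
  moreover have "T \<subseteq> F - {{a, b}}" using T(1) e ab(1) by blast
  ultimately show ?thesis using that e ab(1) rtrancl_adj_mono by blast
qed

lemma card_ge_if_redundant_edge:
  assumes "simple_graph V F" and "connected_graph V F"
    and "{a, b} \<in> F" and "(a, b) \<in> (adj (F - {{a, b}}))\<^sup>*"
  shows "card V \<le> card F"
proof -
  let ?F = "F - {{a, b}}"
  have "adj F \<subseteq> (adj ?F)\<^sup>*"
  proof
    fix q assume "q \<in> adj F"
    then obtain s t where q: "q = (s, t)" "{s, t} \<in> F" by (auto simp: adj_def)
    show "q \<in> (adj ?F)\<^sup>*"
    proof (cases "{s, t} = {a, b}")
      case True
      then show ?thesis using q(1) assms(4) rtrancl_adj_sym by (auto simp: doubleton_eq_iff)
    next
      case False
      then have "(s, t) \<in> adj ?F" using q(2) by (simp add: mem_adj_iff)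
      then show ?thesis using q(1) by simp
    qed
  qed
  then have "connected_graph V ?F"
    using assms(2) rtrancl_subset_rtrancl unfolding connected_graph_def by blast
  then have "card V - 1 \<le> card ?F"
    using card_edges_ge_if_connected simple_graph_subset[OF assms(1)] by blast
  moreover have "card ?F = card F - 1" "card F \<ge> 1"
    using assms(3) simple_graph_finite_edges[OF assms(1)] by (auto simp: Suc_le_eq card_gt_0_iff)
  ultimately show ?thesis by linarith
qed

section \<open>Paths, cycles and blocks\<close>

text \<open>A shortest walk is a path without chords.\<close>
lemma induced_path_exists:
  assumes "(a, b) \<in> (adj F)\<^sup>*" and "a \<noteq> b"
  obtains p k where "p 0 = a" "p k = b" "k \<ge> 1" "\<And>i. i < k \<Longrightarrow> {p i, p (Suc i)} \<in> F"
    "inj_on p {..k}" "\<And>i j. i < j \<Longrightarrow> j \<le> k \<Longrightarrow> {p i, p j} \<in> F \<Longrightarrow> j = Suc i"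
proof -
  define R where "R = adj F"
  define k where "k = (LEAST n. (a, b) \<in> R ^^ n)"
  have "\<exists>n. (a, b) \<in> R ^^ n" using assms(1) rtrancl_power unfolding R_def by blast
  then have "(a, b) \<in> R ^^ k" unfolding k_def by (rule LeastI_ex)
  then obtain p where p: "p 0 = a" "p k = b" "\<And>i. i < k \<Longrightarrow> (p i, p (Suc i)) \<in> R"
    unfolding relpow_fun_conv by blast
  have k_min: "k \<le> m" if "(a, b) \<in> R ^^ m" for m
    unfolding k_def using that by (rule Least_le)
  have prefix: "(a, p i) \<in> R ^^ i" if "i \<le> k" for i
    unfolding relpow_fun_conv using p that by (intro exI[of _ p]) auto
  have suffix: "(p j, b) \<in> R ^^ (k - j)" if "j \<le> k" for j
    unfolding relpow_fun_conv using p that by (intro exI[of _ "\<lambda>m. p (j + m)"]) auto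
  have shortcut: "(a, b) \<in> R ^^ (l + (k - j))" if "(a, p j) \<in> R ^^ l" "j \<le> k" for j l
    using relpow_add[of l "k - j" R] that suffix by auto
  have "inj_on p {..k}"
  proof (rule linorder_inj_onI)
    fix i j assume "i < j" "i \<in> {..k}" "j \<in> {..k}"
    then show "p i \<noteq> p j"
      using prefix[of i] shortcut[of j i] k_min[of "i + (k - j)"] by auto
  qed auto
  moreover have "j = Suc i" if "i < j" "j \<le> k" "{p i, p j} \<in> F" for i j
  proof -
    have "(a, p j) \<in> R ^^ Suc i"
      using prefix[of i] that by (auto simp: R_def mem_adj_iff)
    then show ?thesis using shortcut[of j "Suc i"] k_min[of "Suc i + (k - j)"] that by auto
  qed
  moreover have "k \<ge> 1" using p assms(2) by (cases k) auto
  ultimately show ?thesis using that p by (auto simp: R_def mem_adj_iff)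
qed

definition cycle_vertices :: "(nat \<Rightarrow> 'a) \<Rightarrow> nat \<Rightarrow> 'a set" where
  "cycle_vertices p k = p ` {..k}"

definition cycle_edges :: "(nat \<Rightarrow> 'a) \<Rightarrow> nat \<Rightarrow> 'a set set" where
  "cycle_edges p k = insert {p k, p 0} ((\<lambda>i. {p i, p (Suc i)}) ` {..<k})"

lemma connected_cycle: "connected_graph (cycle_vertices p k) (cycle_edges p k)"
proof (rule connected_graphI)
  show "p 0 \<in> cycle_vertices p k" by (simp add: cycle_vertices_def)
  show "(p 0, v) \<in> (adj (cycle_edges p k))\<^sup>*" if "v \<in> cycle_vertices p k" for v
    using that rtrancl_adj_walk[of 0 _ p "cycle_edges p k"]
    by (auto simp: cycle_vertices_def cycle_edges_def)
qed

text \<open>After deleting p j, every other vertex of the cycle is joined to p 0 (or to p k if j = 0)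
  along the arc avoiding p j.\<close>
lemma cycle_no_cut_vertex:
  assumes "inj_on p {..k}"
  shows "has_no_cut_vertex (cycle_vertices p k) (cycle_edges p k)"
  unfolding has_no_cut_vertex_def
proof (intro allI notI)
  fix x assume "cut_vertex (cycle_vertices p k) (cycle_edges p k) x"
  then obtain j u w where j: "j \<le> k" "x = p j"
    and uw: "u \<in> cycle_vertices p k - {x}" "w \<in> cycle_vertices p k - {x}"
    and disc: "(u, w) \<notin> (adj {e \<in> cycle_edges p k. x \<notin> e})\<^sup>*"
    unfolding cut_vertex_def cycle_vertices_def by blast
  define F where "F = {e \<in> cycle_edges p k. x \<notin> e}"
  define r where "r = (if j = 0 then p k else p 0)"
  have avoid: "{p m, p (Suc m)} \<in> F" if "m < k" "m \<noteq> j" "Suc m \<noteq> j" for m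
    using that j assms by (auto simp: F_def cycle_edges_def inj_on_eq_iff)
  have to_r: "(p i, r) \<in> (adj F)\<^sup>*" if "i \<le> k" "i \<noteq> j" for i
  proof (cases "i < j")
    case True
    then have "(p 0, p i) \<in> (adj F)\<^sup>*" using avoid j(1) by (intro rtrancl_adj_walk) auto
    then show ?thesis using True rtrancl_adj_sym by (simp add: r_def)
  next
    case False
    then have "(p i, p k) \<in> (adj F)\<^sup>*" using avoid that by (intro rtrancl_adj_walk) auto
    moreover have "(p k, p 0) \<in> adj F" if "j \<noteq> 0"
      using that j \<open>\<not> i < j\<close> \<open>i \<le> k\<close> \<open>i \<noteq> j\<close> assms
      by (auto simp: F_def cycle_edges_def mem_adj_iff inj_on_eq_iff)
    ultimately show ?thesis by (auto simp: r_def)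
  qed
  obtain i i' where "i \<le> k" "i' \<le> k" "u = p i" "w = p i'" "i \<noteq> j" "i' \<noteq> j"
    using uw j by (auto simp: cycle_vertices_def)
  then have "(u, r) \<in> (adj F)\<^sup>*" "(w, r) \<in> (adj F)\<^sup>*" using to_r by auto
  then have "(u, w) \<in> (adj F)\<^sup>*" using rtrancl_trans rtrancl_adj_sym by metis
  then show False using disc by (simp add: F_def)
qed

lemma subgraph_cycle:
  assumes "simple_graph V E" and "\<And>i. i < k \<Longrightarrow> {p i, p (Suc i)} \<in> E" and "{p k, p 0} \<in> E"
  shows "subgraph (cycle_vertices p k) (cycle_edges p k) V E"
proof -
  have "p i \<in> V" if "i \<le> k" for i
    using that assms simple_graph_edgeD[OF assms(1)] by (cases "i < k") auto
  then show ?thesis using assms(2,3) by (auto simp: subgraph_def cycle_vertices_def cycle_edges_def)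
qed

text \<open>A biconnected subgraph with the most vertices and edges among those containing (C, EC) is
  a block.\<close>
lemma block_containing:
  assumes "simple_graph V E" and "subgraph C EC V E" "connected_graph C EC" "has_no_cut_vertex C EC"
  obtains B EB where "block V E B EB" "C \<subseteq> B" "EC \<subseteq> EB"
proof -
  define P where "P q \<longleftrightarrow> subgraph (fst q) (snd q) V E \<and> connected_graph (fst q) (snd q) \<and>
      has_no_cut_vertex (fst q) (snd q) \<and> C \<subseteq> fst q \<and> EC \<subseteq> snd q" for q
  define total where "total q = card (fst q) + card (snd q)" for q :: "'a set \<times> 'a set set"
  have fin: "finite V" "finite E"
    using assms(1) simple_graph_finite_edges by (auto simp: simple_graph_def)
  have "total q < card V + card E + 1" if "P q" for q
  proof -
    have "fst q \<subseteq> V" "snd q \<subseteq> E" using that by (auto simp: P_def subgraph_def)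
    then have "card (fst q) \<le> card V" "card (snd q) \<le> card E"
      using fin by (auto intro: card_mono)
    then show ?thesis by (simp add: total_def)
  qed
  moreover have "P (C, EC)" using assms by (simp add: P_def)
  ultimately obtain q where q: "P q" and q_max: "\<And>q'. P q' \<Longrightarrow> total q' \<le> total q"
    using Lattices_Big.ex_has_greatest_nat[of P "(C, EC)" total] by blast
  obtain B EB where qBE: "q = (B, EB)" by fastforce
  have "B' = B \<and> EB' = EB" if "subgraph B' EB' V E" "connected_graph B' EB'"
    "has_no_cut_vertex B' EB'" "B \<subseteq> B'" "EB \<subseteq> EB'" for B' EB'
  proof -
    have "P (B', EB')" using that q qBE by (auto simp: P_def)
    then have "card B' + card EB' \<le> card B + card EB" using q_max qBE by (fastforce simp: total_def)
    moreover have "finite B'" "finite EB'"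
      using that(1) fin by (auto simp: subgraph_def intro: finite_subset)
    moreover from this have "card B \<le> card B'" "card EB \<le> card EB'"
      using that(4,5) by (auto intro: card_mono)
    ultimately have "card B = card B'" "card EB = card EB'" by linarith+
    then show ?thesis
      using card_subset_eq[OF \<open>finite B'\<close> that(4)] card_subset_eq[OF \<open>finite EB'\<close> that(5)]
      by simp
  qed
  then have "block V E B EB" using q qBE by (auto simp: block_def P_def)
  then show ?thesis using that q qBE by (simp add: P_def)
qed

lemma cycle_vertices_pairwise_adjacent:
  assumes "simple_graph V E" and "\<forall>B EB. block V E B EB \<longrightarrow> is_clique B EB"
    and "\<And>i. i < k \<Longrightarrow> {p i, p (Suc i)} \<in> E" and "{p k, p 0} \<in> E" and "inj_on p {..k}"
    and "i \<le> k" "j \<le> k" "i \<noteq> j"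
  shows "{p i, p j} \<in> E"
proof -
  obtain B EB where B: "block V E B EB" "cycle_vertices p k \<subseteq> B" "cycle_edges p k \<subseteq> EB"
    by (rule block_containing[OF assms(1) subgraph_cycle[OF assms(1,3,4)] connected_cycle
          cycle_no_cut_vertex[OF assms(5)]])
  moreover have "p i \<in> cycle_vertices p k" "p j \<in> cycle_vertices p k" "p i \<noteq> p j"
    using assms(6-8) inj_onD[OF assms(5)] by (auto simp: cycle_vertices_def)
  moreover have "is_clique B EB" using assms(2) B(1) by blast
  ultimately have "{p i, p j} \<in> EB" unfolding is_clique_def by blast
  then show ?thesis using B(1) unfolding block_def subgraph_def by blast
qed

text \<open>Adding the edge uv to a block keeps it biconnected, so by maximality it is already there.\<close>
lemma block_edge_if_adjacent:
  assumes "block V E B EB" and "u \<in> B" "v \<in> B" and "{u, v} \<in> E"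
  shows "{u, v} \<in> EB"
proof -
  define EB' where "EB' = insert {u, v} EB"
  have B: "subgraph B EB V E" "connected_graph B EB" "has_no_cut_vertex B EB"
    using assms(1) by (auto simp: block_def)
  have "subgraph B EB' V E" using B(1) assms(2-4) by (auto simp: subgraph_def EB'_def)
  moreover have "connected_graph B EB'"
    using B(2) rtrancl_adj_mono[of EB EB'] unfolding connected_graph_def EB'_def by blast
  moreover have "has_no_cut_vertex B EB'"
    unfolding has_no_cut_vertex_def
  proof (intro allI notI)
    fix x assume "cut_vertex B EB' x"
    then obtain a w where "x \<in> B" "a \<in> B - {x}" "w \<in> B - {x}"
      and disc: "(a, w) \<notin> (adj {e \<in> EB'. x \<notin> e})\<^sup>*"
      by (auto simp: cut_vertex_def)
    then have "(a, w) \<in> (adj {e \<in> EB. x \<notin> e})\<^sup>*"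
      using B(2,3) unfolding has_no_cut_vertex_def cut_vertex_def connected_graph_def by blast
    moreover have "{e \<in> EB. x \<notin> e} \<subseteq> {e \<in> EB'. x \<notin> e}" by (auto simp: EB'_def)
    ultimately show False using disc rtrancl_adj_mono by blast
  qed
  moreover have "EB \<subseteq> EB'" by (auto simp: EB'_def)
  ultimately have "EB' = EB" using assms(1) unfolding block_def by blast
  then show ?thesis unfolding EB'_def by blast
qed

section \<open>The equality case\<close>

text \<open>The earliest vertex of the cycle is a common neighbour, ranked before both ends, of a cycle
  edge not incident to it.\<close>
lemma early_edges_no_complete_cycle:
  assumes "inj_on f V" and "k \<ge> 2" and "inj_on p {..k}" and "p ` {..k} \<subseteq> V"
    and adjacent: "\<And>i j. i \<le> k \<Longrightarrow> j \<le> k \<Longrightarrow> i \<noteq> j \<Longrightarrow> {p i, p j} \<in> E"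
    and "cycle_edges p k \<subseteq> early_edges E f"
  shows False
proof -
  obtain m where m: "m \<le> k" and m_least: "\<And>i. i \<le> k \<Longrightarrow> f (p m) \<le> f (p i)"
    using ex_has_least_nat[of "\<lambda>i. i \<le> k" 0 "\<lambda>i. f (p i)"] by auto
  have earlier: "f (p m) < f (p i)" if "i \<le> k" "i \<noteq> m" for i
  proof -
    have "p m \<noteq> p i" using assms(3) m that inj_onD by fastforce
    then have "f (p m) \<noteq> f (p i)" using assms(1,4) m that inj_onD by fastforce
    then show ?thesis using m_least[OF that(1)] by simp
  qed
  obtain i j where ij: "i \<le> k" "j \<le> k" "i \<noteq> m" "j \<noteq> m" "{p i, p j} \<in> cycle_edges p k"
  proof -
    consider "m = 0" | "m = k" "m \<noteq> 0" | "m \<noteq> 0" "m \<noteq> k" by blast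
    then show ?thesis
    proof cases
      case 1
      then show ?thesis using that[of 1 2] assms(2) by (force simp: cycle_edges_def numeral_2_eq_2)
    next
      case 2
      then show ?thesis using that[of 0 1] assms(2) by (force simp: cycle_edges_def)
    next
      case 3
      then show ?thesis using that[of k 0] m by (simp add: cycle_edges_def)
    qed
  qed
  then have "{p i, p j} \<in> early_edges E f" using assms(6) by blast
  then obtain u where u: "u \<in> {p i, p j}" "\<forall>w\<in>common_nbrs E {p i, p j}. f u < f w"
    by (auto simp: early_edges_def)
  have "p m \<in> common_nbrs E {p i, p j}"
    using adjacent ij m by (simp add: mem_common_nbrs_pair insert_commute)
  then show False using u earlier ij by fastforce
qed

lemma card_early_edges_le_if_clique_blocks:
  assumes "simple_graph V E" and "connected_graph V E"
    and "\<forall>B EB. block V E B EB \<longrightarrow> is_clique B EB" and "f \<in> rankings V"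
  shows "card (early_edges E f) \<le> card V - 1"
proof (rule ccontr)
  let ?H = "early_edges E f"
  have H: "simple_graph V ?H" "connected_graph V ?H"
    using simple_graph_subset[OF assms(1) early_edges_subset]
      connected_early_edges[OF assms(1,2) inj_on_ranking[OF assms(4)]] by auto
  assume "\<not> card ?H \<le> card V - 1"
  then have "card V \<le> card ?H" by linarith
  then obtain a b where ab: "{a, b} \<in> ?H" "(a, b) \<in> (adj (?H - {{a, b}}))\<^sup>*"
    by (rule redundant_edge_if_card_ge[OF H])
  have "a \<noteq> b" using simple_graph_edgeD[OF H(1) ab(1)] by blast
  obtain p k where p: "p 0 = a" "p k = b" "k \<ge> 1"
    "\<And>i. i < k \<Longrightarrow> {p i, p (Suc i)} \<in> ?H - {{a, b}}" "inj_on p {..k}"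
    "\<And>i j. i < j \<Longrightarrow> j \<le> k \<Longrightarrow> {p i, p j} \<in> ?H - {{a, b}} \<Longrightarrow> j = Suc i"
    using induced_path_exists[OF ab(2) \<open>a \<noteq> b\<close>] by metis
  have "k \<noteq> 1" using p(4)[of 0] p(1,2) by auto
  then have "k \<ge> 2" using p(3) by simp
  have walk: "\<And>i. i < k \<Longrightarrow> {p i, p (Suc i)} \<in> E"
    using p(4) early_edges_subset by blast
  have closing: "{p k, p 0} \<in> ?H" using ab(1) p(1,2) by (simp add: insert_commute)
  then have closing_E: "{p k, p 0} \<in> E" using early_edges_subset by blast
  have "cycle_edges p k \<subseteq> ?H" using p(4) closing by (auto simp: cycle_edges_def)
  moreover have "p ` {..k} \<subseteq> V"
    using subgraph_cycle[where p = p and k = k, OF assms(1) walk closing_E]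
    by (simp add: subgraph_def cycle_vertices_def)
  moreover have "{p i, p j} \<in> E" if "i \<le> k" "j \<le> k" "i \<noteq> j" for i j
    by (rule cycle_vertices_pairwise_adjacent[where p = p and k = k, OF assms(1,3) walk closing_E p(5) that])
  ultimately show False
    using early_edges_no_complete_cycle[OF inj_on_ranking[OF assms(4)] \<open>k \<ge> 2\<close> p(5)] by blast
qed

text \<open>On a walk inside the block from x to a non-neighbour of x, the first non-neighbour z follows
  a neighbour y; as y is not a cut vertex, x and z stay connected without y.\<close>
lemma block_not_clique_induced_path:
  assumes "simple_graph V E" and "block V E B EB" and "\<not> is_clique B EB"
  obtains x y z where "{x, y} \<in> E" "{y, z} \<in> E" "{x, z} \<notin> E" "x \<noteq> z"
    "(x, z) \<in> (adj {e \<in> E. y \<notin> e})\<^sup>*"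
proof -
  have B: "subgraph B EB V E" "connected_graph B EB" "has_no_cut_vertex B EB"
    using assms(2) unfolding block_def by blast+
  then have EB_E: "EB \<subseteq> E" by (simp add: subgraph_def)
  obtain x c where xc: "x \<in> B" "c \<in> B" "x \<noteq> c" "{x, c} \<notin> EB"
    using assms(3) unfolding is_clique_def by blast
  then have "{x, c} \<notin> E" using block_edge_if_adjacent[OF assms(2)] by blast
  have "(x, c) \<in> (adj EB)\<^sup>*" using B(2) xc by (simp add: connected_graph_def)
  then have "c \<noteq> x \<longrightarrow> {x, c} \<notin> E \<longrightarrow> (\<exists>y z. {x, y} \<in> E \<and> {y, z} \<in> EB \<and> z \<noteq> x \<and> {x, z} \<notin> E)"
  proof (induction rule: rtrancl_induct)
    case (step y c)
    then have "{y, c} \<in> EB" by (simp add: mem_adj_iff)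
    then show ?case using step.IH EB_E by (cases "y = x") blast+
  qed simp
  then obtain y z where yz: "{x, y} \<in> E" "{y, z} \<in> EB" "z \<noteq> x" "{x, z} \<notin> E"
    using xc \<open>{x, c} \<notin> E\<close> by blast
  have "y \<in> B" "z \<in> B" using yz(2) B(1) by (auto simp: subgraph_def)
  moreover have "y \<noteq> x" "y \<noteq> z"
    using simple_graph_edgeD[OF assms(1) yz(1)] simple_graph_edgeD[OF assms(1)] yz(2) EB_E by blast+
  moreover have "(x, z) \<in> (adj EB)\<^sup>*" using B(2) xc \<open>z \<in> B\<close> by (simp add: connected_graph_def)
  ultimately have "(x, z) \<in> (adj {e \<in> EB. y \<notin> e})\<^sup>*"
    using B(3) xc(1) yz(3) unfolding has_no_cut_vertex_def cut_vertex_def by blast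
  moreover have "{e \<in> EB. y \<notin> e} \<subseteq> {e \<in> E. y \<notin> e}" using EB_E by blast
  ultimately have "(x, z) \<in> (adj {e \<in> E. y \<notin> e})\<^sup>*" using rtrancl_adj_mono by blast
  then show ?thesis using that yz EB_E by blast
qed

lemma walk_vertices_subset:
  assumes "simple_graph V E" and "0 < k" and "\<And>i. i < k \<Longrightarrow> {p i, p (Suc i)} \<in> E"
  shows "p ` {..k} \<subseteq> V"
proof
  fix v assume "v \<in> p ` {..k}"
  then obtain i where i: "i \<le> k" "v = p i" by blast
  show "v \<in> V"
  proof (cases "i < k")
    case True
    then show ?thesis using i(2) simple_graph_edgeD[OF assms(1) assms(3)[OF True]] by blast
  next
    case False
    then have "{p (k - 1), v} \<in> E" using assms(3)[of "k - 1"] assms(2) i by simp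
    then show ?thesis using simple_graph_edgeD[OF assms(1)] by blast
  qed
qed

lemma ranking_path_first:
  assumes "finite V" and "0 < k" and "inj_on p {..k}" and "p ` {..k} \<subseteq> V"
  obtains f where "f \<in> rankings V" "f (p 0) = 0" "f (p k) = 1" "\<And>i. i \<le> k \<Longrightarrow> f (p i) \<le> k"
    "\<And>w. w \<in> V \<Longrightarrow> f w \<le> k \<Longrightarrow> w \<in> p ` {..k}"
proof -
  define Q where "Q = map p (0 # k # [1..<k])"
  have set_idx: "set (0 # k # [1..<k]) = {..k}" using assms(2) by auto
  have "distinct (0 # k # [1..<k])" using assms(2) by auto
  then have Q: "set Q = p ` {..k}" "length Q = Suc k" "distinct Q"
    using assms(2,3) unfolding Q_def set_map distinct_map set_idx by auto
  obtain f where f: "f \<in> rankings V" and fQ: "\<And>i. i < length Q \<Longrightarrow> f (Q ! i) = i"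
    and early: "\<And>w. w \<in> V \<Longrightarrow> f w < length Q \<Longrightarrow> w \<in> set Q"
    using ranking_extending_list[OF assms(1) Q(3)] Q(1) assms(4) by metis
  have "f (p 0) = 0" "f (p k) = 1" using fQ[of 0] fQ[of 1] Q(2) by (auto simp: Q_def)
  moreover have "f (p i) \<le> k" if "i \<le> k" for i
  proof -
    have "p i \<in> set Q" using that Q(1) by simp
    then obtain j where "j < length Q" "Q ! j = p i" by (auto simp: in_set_conv_nth)
    then show ?thesis using fQ Q(2) by force
  qed
  moreover have "w \<in> p ` {..k}" if "w \<in> V" "f w \<le> k" for w
    using early[OF that(1)] that(2) Q(1,2) by simp
  ultimately show ?thesis using that f by blast
qed

lemma chordless_path_adjacent_indices:
  assumes "simple_graph V E"
    and chordless: "\<And>i j. i < j \<Longrightarrow> j \<le> k \<Longrightarrow> {p i, p j} \<in> E \<Longrightarrow> j = Suc i"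
    and "i \<le> k" "l \<le> k" "{p i, p l} \<in> E"
  shows "l = Suc i \<or> i = Suc l"
proof -
  have "i \<noteq> l" using simple_graph_edgeD[OF assms(1,5)] by auto
  then consider "i < l" | "l < i" by linarith
  then show ?thesis
  proof cases
    case 1
    then show ?thesis using chordless[of i l] assms(3-5) by simp
  next
    case 2
    then show ?thesis using chordless[of l i] assms(3-5) by (simp add: insert_commute)
  qed
qed

text \<open>Rank the chordless path p 0, ..., p k first, in the order p 0, p k, p 1, ..., p (k - 1).
  Then every vertex ranked before p i lies on the path and so is not a common neighbour of a path
  edge, and only p 0, which is not adjacent to p k, comes before p k.\<close>
lemma early_edges_cycle_ranking:
  assumes "simple_graph V E" and "k \<ge> 2" and "inj_on p {..k}"
    and walk: "\<And>i. i < k \<Longrightarrow> {p i, p (Suc i)} \<in> E"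
    and chordless: "\<And>i j. i < j \<Longrightarrow> j \<le> k \<Longrightarrow> {p i, p j} \<in> E \<Longrightarrow> j = Suc i"
    and "{p 0, y} \<in> E" and "{p k, y} \<in> E"
  obtains f where "f \<in> rankings V" "\<And>i. i < k \<Longrightarrow> {p i, p (Suc i)} \<in> early_edges E f"
    "{p 0, y} \<in> early_edges E f" "{p k, y} \<in> early_edges E f"
proof -
  have "finite V" "0 < k" using assms(1,2) by (simp_all add: simple_graph_def)
  have path_V: "p ` {..k} \<subseteq> V"
    by (rule walk_vertices_subset[where p = p, OF assms(1) \<open>0 < k\<close> walk])
  obtain f where f: "f \<in> rankings V" and f0: "f (p 0) = 0" and fk: "f (p k) = 1"
    and f_path: "\<And>i. i \<le> k \<Longrightarrow> f (p i) \<le> k"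
    and early_on_path: "\<And>w. w \<in> V \<Longrightarrow> f w \<le> k \<Longrightarrow> w \<in> p ` {..k}"
    using ranking_path_first[OF \<open>finite V\<close> \<open>0 < k\<close> assms(3) path_V] by metis
  have inj: "inj_on f V" using inj_on_ranking[OF f] .
  have adj_idx: "l = Suc i \<or> i = Suc l" if "i \<le> k" "l \<le> k" "{p i, p l} \<in> E" for i l
    by (rule chordless_path_adjacent_indices[where p = p and k = k, OF assms(1) _ that]) (rule chordless)
  have "{p i, p (Suc i)} \<in> early_edges E f" if "i < k" for i
  proof (rule early_edgesI[OF assms(1) inj walk[OF that]])
    fix w assume w: "w \<in> common_nbrs E {p i, p (Suc i)}" "f w < f (p i)"
    then have "w \<in> V" using common_nbrs_subset[OF assms(1) walk[OF that]] by blast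
    then have "w \<in> p ` {..k}" using early_on_path f_path[of i] w(2) that by simp
    then obtain l where l: "l \<le> k" "w = p l" by blast
    then have "l = Suc i \<or> i = Suc l" "l = Suc (Suc i) \<or> Suc i = Suc l"
      using w(1) adj_idx[of i l] adj_idx[of "Suc i" l] that by (auto simp: mem_common_nbrs_pair)
    then show False by auto
  qed
  moreover have "{p 0, y} \<in> early_edges E f"
    by (rule early_edgesI[OF assms(1) inj assms(6)]) (simp add: f0)
  moreover have "{p k, y} \<in> early_edges E f"
  proof (rule early_edgesI[OF assms(1) inj assms(7)])
    fix w assume w: "w \<in> common_nbrs E {p k, y}" "f w < f (p k)"
    then have "w \<in> V" using common_nbrs_subset[OF assms(1,7)] by blast
    moreover have "p 0 \<in> V" using path_V by auto
    moreover have "f w = f (p 0)" using w(2) fk f0 by simp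
    ultimately have "w = p 0" using inj_onD[OF inj] by blast
    then have "{p 0, p k} \<in> E" using w(1) by (simp add: mem_common_nbrs_pair insert_commute)
    then show False using adj_idx[of 0 k] assms(2) by simp
  qed
  ultimately show ?thesis using that f by blast
qed

text \<open>A shortest x-z path avoiding y closes, through y, a cycle that has chords at most at y.\<close>
lemma block_not_clique_chordless_cycle:
  assumes "simple_graph V E" and "block V E B EB" and "\<not> is_clique B EB"
  obtains y p k where "k \<ge> 2" "inj_on p {..k}" "\<And>i. i < k \<Longrightarrow> {p i, p (Suc i)} \<in> E"
    "\<And>i j. i < j \<Longrightarrow> j \<le> k \<Longrightarrow> {p i, p j} \<in> E \<Longrightarrow> j = Suc i"
    "\<And>i. i \<le> k \<Longrightarrow> p i \<noteq> y" "{p 0, y} \<in> E" "{p k, y} \<in> E"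
proof -
  obtain x y z where xyz: "{x, y} \<in> E" "{y, z} \<in> E" "{x, z} \<notin> E" "x \<noteq> z"
    and avoid_y: "(x, z) \<in> (adj {e \<in> E. y \<notin> e})\<^sup>*"
    by (rule block_not_clique_induced_path[OF assms]) (rule that)
  obtain p k where p: "p 0 = x" "p k = z" "k \<ge> 1"
    and walk: "\<And>i. i < k \<Longrightarrow> {p i, p (Suc i)} \<in> {e \<in> E. y \<notin> e}" and inj: "inj_on p {..k}"
    and chordless: "\<And>i j. i < j \<Longrightarrow> j \<le> k \<Longrightarrow> {p i, p j} \<in> {e \<in> E. y \<notin> e} \<Longrightarrow> j = Suc i"
    by (rule induced_path_exists[OF avoid_y xyz(4)]) (rule that)
  have off_y: "p i \<noteq> y" if "i \<le> k" for i
  proof (cases "i < k")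
    case True
    then show ?thesis using walk by blast
  next
    case False
    then show ?thesis using that p(2) simple_graph_edgeD[OF assms(1) xyz(2)] by auto
  qed
  have "k \<noteq> 1" using walk[of 0] p(1,2) xyz(3) by auto
  then have "k \<ge> 2" using p(3) by simp
  moreover have "j = Suc i" if "i < j" "j \<le> k" "{p i, p j} \<in> E" for i j
    using chordless[OF that(1,2)] that off_y[of i] off_y[of j] by simp
  moreover have "{p 0, y} \<in> E" "{p k, y} \<in> E"
    using xyz(1,2) p(1,2) by (simp_all add: insert_commute)
  ultimately show ?thesis using that[OF _ inj _ _ off_y] walk by blast
qed

lemma card_early_edges_ge_if_not_clique_block:
  assumes "simple_graph V E" and "connected_graph V E"
    and "block V E B EB" and "\<not> is_clique B EB"
  obtains f where "f \<in> rankings V" "card V \<le> card (early_edges E f)"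
proof -
  obtain y p k where "k \<ge> 2" and inj: "inj_on p {..k}"
    and walk: "\<And>i. i < k \<Longrightarrow> {p i, p (Suc i)} \<in> E"
    and chordless: "\<And>i j. i < j \<Longrightarrow> j \<le> k \<Longrightarrow> {p i, p j} \<in> E \<Longrightarrow> j = Suc i"
    and off_y: "\<And>i. i \<le> k \<Longrightarrow> p i \<noteq> y" and y_ends: "{p 0, y} \<in> E" "{p k, y} \<in> E"
    by (rule block_not_clique_chordless_cycle[OF assms(1,3,4)]) (rule that)
  obtain f where f: "f \<in> rankings V" and H_walk: "\<And>i. i < k \<Longrightarrow> {p i, p (Suc i)} \<in> early_edges E f"
    and H0: "{p 0, y} \<in> early_edges E f" and Hk: "{p k, y} \<in> early_edges E f"
    using early_edges_cycle_ranking[OF assms(1) \<open>k \<ge> 2\<close> inj walk chordless y_ends] by blast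
  let ?H = "early_edges E f - {{p k, y}}"
  have "p 0 \<noteq> p k" using inj_on_contraD[OF inj, of 0 k] \<open>k \<ge> 2\<close> by simp
  then have edge_H: "(p 0, y) \<in> adj ?H" using H0 by (auto simp: mem_adj_iff doubleton_eq_iff)
  have "(p 0, p k) \<in> (adj ?H)\<^sup>*"
    using H_walk off_y by (intro rtrancl_adj_walk) (auto simp: doubleton_eq_iff)
  then have "(p k, y) \<in> (adj ?H)\<^sup>*"
    using rtrancl_into_rtrancl[OF rtrancl_adj_sym edge_H] by blast
  then have "card V \<le> card (early_edges E f)"
    by (rule card_ge_if_redundant_edge[OF simple_graph_subset[OF assms(1) early_edges_subset]
          connected_early_edges[OF assms(1,2) inj_on_ranking[OF f]] Hk])
  then show ?thesis by (rule that[OF f])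
qed

lemma mean_ge_and_eq_iff:
  fixes g :: "'b \<Rightarrow> real"
  assumes "finite A" and "A \<noteq> {}" and "\<And>x. x \<in> A \<Longrightarrow> c \<le> g x"
    and "(\<Sum>x\<in>A. g x) = real (card A) * t"
  shows "c \<le> t" and "t = c \<longleftrightarrow> (\<forall>x\<in>A. g x = c)"
proof -
  have "(\<Sum>x\<in>A. g x - c) = real (card A) * (t - c)"
    using assms(4) by (simp add: sum_subtractf algebra_simps)
  moreover have "(\<Sum>x\<in>A. g x - c) \<ge> 0" using assms(3) by (simp add: sum_nonneg)
  moreover have "real (card A) > 0" using assms(1,2) by (simp add: card_gt_0_iff)
  ultimately show "c \<le> t" and "t = c \<longleftrightarrow> (\<forall>x\<in>A. g x = c)"
    using sum_nonneg_eq_0_iff[OF assms(1), of "\<lambda>x. g x - c"] assms(3)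
    by (auto simp: zero_le_mult_iff)
qed

lemma card_early_edges_ge:
  assumes "simple_graph V E" and "connected_graph V E" and "f \<in> rankings V"
  shows "card V - 1 \<le> card (early_edges E f)"
  by (rule card_edges_ge_if_connected[OF simple_graph_subset[OF assms(1) early_edges_subset]
        connected_early_edges[OF assms(1,2) inj_on_ranking[OF assms(3)]]])

lemma card_early_edges_eq_iff_clique_blocks:
  assumes "simple_graph V E" and "connected_graph V E"
  shows "(\<forall>f\<in>rankings V. card (early_edges E f) = card V - 1)
    \<longleftrightarrow> (\<forall>B EB. block V E B EB \<longrightarrow> is_clique B EB)"
proof (intro iffI allI impI ballI)
  fix B EB assume trees: "\<forall>f\<in>rankings V. card (early_edges E f) = card V - 1"
    and "block V E B EB"
  show "is_clique B EB"
  proof (rule ccontr)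
    assume "\<not> is_clique B EB"
    then obtain f where "f \<in> rankings V" "card V \<le> card (early_edges E f)"
      by (rule card_early_edges_ge_if_not_clique_block[OF assms \<open>block V E B EB\<close>])
    then have "card V \<le> card V - 1" using trees by simp
    moreover have "card V > 0"
      using assms by (auto simp: simple_graph_def connected_graph_def card_gt_0_iff)
    ultimately show False by linarith
  qed
next
  fix f assume "\<forall>B EB. block V E B EB \<longrightarrow> is_clique B EB" and f: "f \<in> rankings V"
  then have "card (early_edges E f) \<le> card V - 1"
    using card_early_edges_le_if_clique_blocks[OF assms] by blast
  then show "card (early_edges E f) = card V - 1" using card_early_edges_ge[OF assms f] by (rule antisym)
qed

theorem theorem1:
  fixes V :: "'a set" and E :: "'a set set"
  assumes "simple_graph V E" and "connected_graph V E"
  shows "(\<Sum>e\<in>E. edge_weight E e) \<ge> (real (card V) - 1) / 2 \<and>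
         ((\<Sum>e\<in>E. edge_weight E e) = (real (card V) - 1) / 2 \<longleftrightarrow>
           (\<forall>B EB. block V E B EB \<longrightarrow> is_clique B EB))"
proof -
  let ?s = "\<Sum>e\<in>E. edge_weight E e"
  have fin: "finite V" and "V \<noteq> {}"
    using assms by (auto simp: simple_graph_def connected_graph_def)
  then have n: "real (card V) - 1 = real (card V - 1)"
    by (simp add: of_nat_diff Suc_le_eq card_gt_0_iff)
  have "(\<Sum>f\<in>rankings V. real (card (early_edges E f))) = real (card (rankings V)) * (2 * ?s)"
    using sum_card_early_edges[OF assms(1)] by simp
  from mean_ge_and_eq_iff[OF finite_rankings[OF fin] rankings_nonempty[OF fin] _ this,
      of "real (card V) - 1", unfolded n of_nat_le_iff of_nat_eq_iff, OF card_early_edges_ge[OF assms]]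
  show ?thesis using card_early_edges_eq_iff_clique_blocks[OF assms] by (auto simp: n)
qed

end
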